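(* Equip $K\hat N^\infty_*=\bigoplus_{n\ge1}K\hat N^n$ with the bilinear operations defined on names $\vec v,\vec w$ of degree $\ge1$ by $\vec v\prec\vec w:=\vec v_l\vee(\vec v_r\star\vec w)$ and $\vec v\succ\vec w:=(\vec v\star\vec w_l)\vee\vec w_r$. Then $(K\hat N^\infty_*,\prec,\succ)$ is a dendriform dialgebra with $\prec+\succ=\star$, and it is generated by $(1)$. Moreover, on $K\hat N^\infty=K()\oplus K\hat N^\infty_*$, setting $\vec v\prec():=\vec v=:()\succ\vec v$ and $\vec v\succ():=0=:()\prec\vec v$ for $\vec v\neq()$ (with $()\prec()$, $()\succ()$ undefined and $()\star()=()$), the dendriform axioms continue to hold whenever all terms are defined, and $\vec v\star()=()\star\vec v=\vec v$ for all $\vec v$.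
   Context: $K$ is a field of characteristic zero. $\hat N^0=\{()\}$ and for $n\ge1$, $\hat N^n$ is the set of names of planar rooted binary trees with $n$ internal vertices; every element of $\hat N^n$, $n\ge1$, is uniquely $\vec v_l\vee\vec v_r:=(\vec v_l,1,p+1+\vec v_r)$ with $\vec v_l\in\hat N^p,\vec v_r\in\hat N^q$, $p+q+1=n$, where $k+(w_1,\dots,w_q)=(w_1+k,\dots,w_q+k)$; $\vee$ is extended bilinearly. For $\vec v\in\hat N^n,\vec w\in\hat N^m$: $\vec v\nearrow\vec w=(\vec v,n\triangleright w_1,\dots,n\triangleright w_m)$ with $n\triangleright a=a+n$ for $a\neq1$, $n\triangleright1=1$; $\vec v\nwarrow\vec w=(\vec v,n+\vec w)$. $\vec v\star\vec w$ is the sum of all $\vec t\in\hat N^{n+m}$ with $\vec v\nearrow\vec w\le\vec t\le\vec v\nwarrow\vec w$ (componentwise order), extended bilinearly, with $()\star\vec v=\vec v\star()=\vec v$. A dendriform dialgebra is a vector space $E$ with bilinear operations $\prec,\succ$ such that, with $x\star y:=x\prec y+x\succ y$: $(x\prec y)\prec z=x\prec(y\star z)$, $(x\succ y)\prec z=x\succ(y\prec z)$, $(x\star y)\succ z=x\succ(y\succ z)$ for all $x,y,z$. *)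

theory Defs
  imports Main "HOL-Library.Function_Algebras"
begin

section \<open>Names of planar rooted binary trees\<close>

definition graft :: "nat list \<Rightarrow> nat list \<Rightarrow> nat list" where
  "graft l r = l @ [1] @ map (\<lambda>x. x + (length l + 1)) r"

inductive name :: "nat list \<Rightarrow> bool" where
  name_Nil: "name []"
| name_graft: "name l \<Longrightarrow> name r \<Longrightarrow> name (graft l r)"

text \<open>hat N^n: names of degree (= length = number of internal vertices) n\<close>
definition Nhat :: "nat \<Rightarrow> nat list set" where
  "Nhat n = {v. name v \<and> length v = n}"

definition split_name :: "nat list \<Rightarrow> nat list \<times> nat list" where
  "split_name v = (THE p. name (fst p) \<and> name (snd p) \<and> v = graft (fst p) (snd p))"

definition lft :: "nat list \<Rightarrow> nat list" where "lft v = fst (split_name v)"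
definition rgt :: "nat list \<Rightarrow> nat list" where "rgt v = snd (split_name v)"

definition tri :: "nat \<Rightarrow> nat \<Rightarrow> nat" where
  "tri n a = (if a = 1 then 1 else a + n)"

definition nearrow :: "nat list \<Rightarrow> nat list \<Rightarrow> nat list" where
  "nearrow v w = v @ map (tri (length v)) w"

definition nwarrow :: "nat list \<Rightarrow> nat list \<Rightarrow> nat list" where
  "nwarrow v w = v @ map (\<lambda>a. a + length v) w"

section \<open>The vector space K hat N^\<infinity> as finitely supported functions on names\<close>

definition supp :: "(nat list \<Rightarrow> 'a::zero) \<Rightarrow> nat list set" where
  "supp f = {v. f v \<noteq> 0}"

text \<open>K hat N^\<infinity> (all degrees, including ()) and K hat N^\<infinity>_* (degrees \<ge> 1)\<close>
definition Vspace :: "(nat list \<Rightarrow> 'a::field_char_0) set" where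
  "Vspace = {f. finite (supp f) \<and> supp f \<subseteq> {v. name v}}"

definition Vstar :: "(nat list \<Rightarrow> 'a::field_char_0) set" where
  "Vstar = {f \<in> Vspace. f [] = 0}"

definition bas :: "nat list \<Rightarrow> nat list \<Rightarrow> 'a::field_char_0" where
  "bas v = (\<lambda>t. if t = v then 1 else 0)"

definition smul :: "'a::field_char_0 \<Rightarrow> (nat list \<Rightarrow> 'a) \<Rightarrow> nat list \<Rightarrow> 'a" where
  "smul c f = (\<lambda>t. c * f t)"

definition lin2 :: "(nat list \<Rightarrow> nat list \<Rightarrow> nat list \<Rightarrow> 'a::field_char_0)
    \<Rightarrow> (nat list \<Rightarrow> 'a) \<Rightarrow> (nat list \<Rightarrow> 'a) \<Rightarrow> nat list \<Rightarrow> 'a" where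
  "lin2 b f g = (\<lambda>t. \<Sum>v\<in>supp f. \<Sum>w\<in>supp g. f v * g w * b v w t)"

definition vee_b :: "nat list \<Rightarrow> nat list \<Rightarrow> nat list \<Rightarrow> 'a::field_char_0" where
  "vee_b v w = bas (graft v w)"

definition star_b :: "nat list \<Rightarrow> nat list \<Rightarrow> nat list \<Rightarrow> 'a::field_char_0" where
  "star_b v w = (if v = [] then bas w else if w = [] then bas v else
     (\<lambda>t. if t \<in> Nhat (length v + length w) \<and> list_all2 (\<le>) (nearrow v w) t
              \<and> list_all2 (\<le>) t (nwarrow v w) then 1 else 0))"

definition vee :: "(nat list \<Rightarrow> 'a::field_char_0) \<Rightarrow> (nat list \<Rightarrow> 'a) \<Rightarrow> nat list \<Rightarrow> 'a" where
  "vee = lin2 vee_b"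

definition star :: "(nat list \<Rightarrow> 'a::field_char_0) \<Rightarrow> (nat list \<Rightarrow> 'a) \<Rightarrow> nat list \<Rightarrow> 'a" where
  "star = lin2 star_b"

text \<open>The value at ((),()) is a junk value 0; it is treated as undefined below.\<close>
definition prec_b :: "nat list \<Rightarrow> nat list \<Rightarrow> nat list \<Rightarrow> 'a::field_char_0" where
  "prec_b v w = (if v \<noteq> [] \<and> w \<noteq> [] then vee (bas (lft v)) (star (bas (rgt v)) (bas w))
     else if v \<noteq> [] \<and> w = [] then bas v else 0)"

definition succ_b :: "nat list \<Rightarrow> nat list \<Rightarrow> nat list \<Rightarrow> 'a::field_char_0" where
  "succ_b v w = (if v \<noteq> [] \<and> w \<noteq> [] then vee (star (bas v) (bas (lft w))) (bas (rgt w))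
     else if v = [] \<and> w \<noteq> [] then bas w else 0)"

definition prec :: "(nat list \<Rightarrow> 'a::field_char_0) \<Rightarrow> (nat list \<Rightarrow> 'a) \<Rightarrow> nat list \<Rightarrow> 'a" where
  "prec = lin2 prec_b"

definition succ :: "(nat list \<Rightarrow> 'a::field_char_0) \<Rightarrow> (nat list \<Rightarrow> 'a) \<Rightarrow> nat list \<Rightarrow> 'a" where
  "succ = lin2 succ_b"

text \<open>Partial versions on K hat N^\<infinity>: undefined (None) exactly when the bilinear expansion
  involves () \<prec> () resp. () \<succ> ().\<close>
definition prec_o :: "(nat list \<Rightarrow> 'a::field_char_0) \<Rightarrow> (nat list \<Rightarrow> 'a) \<Rightarrow> (nat list \<Rightarrow> 'a) option" where
  "prec_o f g = (if f [] \<noteq> 0 \<and> g [] \<noteq> 0 then None else Some (prec f g))"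

definition succ_o :: "(nat list \<Rightarrow> 'a::field_char_0) \<Rightarrow> (nat list \<Rightarrow> 'a) \<Rightarrow> (nat list \<Rightarrow> 'a) option" where
  "succ_o f g = (if f [] \<noteq> 0 \<and> g [] \<noteq> 0 then None else Some (succ f g))"

definition dendriform :: "(nat list \<Rightarrow> 'a::field_char_0) set
    \<Rightarrow> ((nat list \<Rightarrow> 'a) \<Rightarrow> (nat list \<Rightarrow> 'a) \<Rightarrow> nat list \<Rightarrow> 'a)
    \<Rightarrow> ((nat list \<Rightarrow> 'a) \<Rightarrow> (nat list \<Rightarrow> 'a) \<Rightarrow> nat list \<Rightarrow> 'a) \<Rightarrow> bool" where
  "dendriform E l r \<longleftrightarrow>
     \<comment> \<open>E is a vector space (subspace of the function space)\<close>
     0 \<in> E \<and> (\<forall>x\<in>E. \<forall>y\<in>E. x + y \<in> E) \<and> (\<forall>c. \<forall>x\<in>E. smul c x \<in> E) \<and>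
     \<comment> \<open>l, r are bilinear operations on E\<close>
     (\<forall>x\<in>E. \<forall>y\<in>E. l x y \<in> E \<and> r x y \<in> E) \<and>
     (\<forall>x\<in>E. \<forall>y\<in>E. \<forall>z\<in>E. l (x + y) z = l x z + l y z \<and> l z (x + y) = l z x + l z y
                       \<and> r (x + y) z = r x z + r y z \<and> r z (x + y) = r z x + r z y) \<and>
     (\<forall>c. \<forall>x\<in>E. \<forall>y\<in>E. l (smul c x) y = smul c (l x y) \<and> l x (smul c y) = smul c (l x y)
                     \<and> r (smul c x) y = smul c (r x y) \<and> r x (smul c y) = smul c (r x y)) \<and>
     \<comment> \<open>dendriform axioms, with x \<star> y := l x y + r x y\<close>
     (\<forall>x\<in>E. \<forall>y\<in>E. \<forall>z\<in>E.
        l (l x y) z = l x (l y z + r y z) \<and>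
        l (r x y) z = r x (l y z) \<and>
        r (l x y + r x y) z = r x (r y z))"

inductive_set gen_by :: "((nat list \<Rightarrow> 'a::field_char_0) \<Rightarrow> (nat list \<Rightarrow> 'a) \<Rightarrow> nat list \<Rightarrow> 'a)
    \<Rightarrow> ((nat list \<Rightarrow> 'a) \<Rightarrow> (nat list \<Rightarrow> 'a) \<Rightarrow> nat list \<Rightarrow> 'a) \<Rightarrow> (nat list \<Rightarrow> 'a)
    \<Rightarrow> (nat list \<Rightarrow> 'a) set"
  for l r x0 where
  gen_base: "x0 \<in> gen_by l r x0"
| gen_zero: "0 \<in> gen_by l r x0"
| gen_add: "x \<in> gen_by l r x0 \<Longrightarrow> y \<in> gen_by l r x0 \<Longrightarrow> x + y \<in> gen_by l r x0"
| gen_smul: "x \<in> gen_by l r x0 \<Longrightarrow> smul c x \<in> gen_by l r x0"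
| gen_l: "x \<in> gen_by l r x0 \<Longrightarrow> y \<in> gen_by l r x0 \<Longrightarrow> l x y \<in> gen_by l r x0"
| gen_r: "x \<in> gen_by l r x0 \<Longrightarrow> y \<in> gen_by l r x0 \<Longrightarrow> r x y \<in> gen_by l r x0"

end

theory Submission
  imports Defs "HOL-Library.Indicator_Function"
begin

text \<open>
  A name t occurs in v \<star> w iff it begins with v and continues with w shifted by |v|, except
  that the entries equal to 1 in w may take any value up to |v| + 1. The root of a name is its
  last entry equal to 1; locating it shows that for v = a \<or> b and w = c \<or> d the names in
  v \<star> w are exactly the disjoint union of a \<or> (b \<star> w) and (v \<star> c) \<or> d, i.e.
  \<star> = \<prec> + \<succ> on names. Bilinearity turns the definitions of \<prec> and \<succ> into
  (F \<or> G) \<prec> H = F \<or> (G \<star> H) and F \<succ> (G \<or> H) = (F \<star> G) \<or> H. With these,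
  associativity of \<star> on names follows by induction on the total degree, the inductive step
  being the three dendriform identities, which need associativity only in smaller degree.
  Finally v \<succ> (1) = v \<or> () and (u \<or> ()) \<prec> w = u \<or> w build every name from (1).
\<close>

lemma length_graft [simp]: "length (graft l r) = length l + 1 + length r"
  by (simp add: graft_def)

lemma graft_not_Nil [simp]: "graft l r \<noteq> []"
  by (simp add: graft_def)

lemma nth_graft:
  "i < length (graft l r) \<Longrightarrow> graft l r ! i =
     (if i < length l then l ! i else if i = length l then 1 else r ! (i - length l - 1) + length l + 1)"
  by (auto simp: graft_def nth_append)

lemma nth_graft_left [simp]: "i < length l \<Longrightarrow> graft l r ! i = l ! i"
  by (simp add: nth_graft)

lemma nth_graft_root [simp]: "graft l r ! length l = 1"
  by (simp add: nth_graft)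

lemma nth_graft_right:
  "length l < i \<Longrightarrow> i < length (graft l r) \<Longrightarrow> graft l r ! i = r ! (i - length l - 1) + length l + 1"
  by (simp add: nth_graft)

lemma name_nth_bounds: "name t \<Longrightarrow> i < length t \<Longrightarrow> 1 \<le> t ! i \<and> t ! i \<le> length t"
proof (induction arbitrary: i rule: name.induct)
  case (name_graft l r)
  consider "i < length l" | "i = length l" | "length l < i" by linarith
  then show ?case
  proof cases
    case 1
    then show ?thesis using name_graft.IH(1)[of i] by simp
  next
    case 3
    then show ?thesis
      using name_graft.prems name_graft.IH(2)[of "i - length l - 1"] by (simp add: nth_graft_right)
  qed simp
qed simp

lemma nth_graft_right_ge:
  "name r \<Longrightarrow> length l < i \<Longrightarrow> i < length (graft l r) \<Longrightarrow> length l + 2 \<le> graft l r ! i"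
  using name_nth_bounds[of r "i - length l - 1"] by (simp add: nth_graft_right)

lemma graft_nth_eq_1_le: "name r \<Longrightarrow> i < length (graft l r) \<Longrightarrow> graft l r ! i = 1 \<Longrightarrow> i \<le> length l"
  using nth_graft_right_ge[of r l i] by (cases "length l < i") auto

lemma name_nth_le_nth: "name t \<Longrightarrow> j < i \<Longrightarrow> i < length t \<Longrightarrow> t ! i \<le> j + 1 \<Longrightarrow> t ! i \<le> t ! j"
proof (induction arbitrary: i j rule: name.induct)
  case (name_graft l r)
  consider "i < length l" | "i = length l" | "length l < i" by linarith
  then show ?case
  proof cases
    case 3
    then have "length l < j"
      using name_graft nth_graft_right_ge[of r l i] by linarith
    then show ?thesis
      using 3 name_graft name_graft.IH(2)[of "j - length l - 1" "i - length l - 1"]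
      by (auto simp: nth_graft_right)
  qed (use name_graft name_nth_bounds[of l j] in auto)
qed simp

lemma graft_inject:
  assumes "name r" "name r'"
  shows "graft l r = graft l' r' \<longleftrightarrow> l = l' \<and> r = r'"
proof
  assume eq: "graft l r = graft l' r'"
  have "\<not> length l < length l'"
    using graft_nth_eq_1_le[OF \<open>name r\<close>, of "length l'" l] nth_graft_root[of l' r', folded eq]
      arg_cong[OF eq, of length] by auto
  moreover have "\<not> length l' < length l"
    using graft_nth_eq_1_le[OF \<open>name r'\<close>, of "length l" l'] nth_graft_root[of l r, unfolded eq]
      arg_cong[OF eq, of length] by auto
  ultimately have len: "length l = length l'" by linarith
  then show "l = l' \<and> r = r'"
    using eq by (auto simp: graft_def inj_on_def)
qed simp

lemma split_name_graft: "name l \<Longrightarrow> name r \<Longrightarrow> split_name (graft l r) = (l, r)"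
  unfolding split_name_def by (rule the_equality) (auto simp: graft_inject)

lemma lft_graft [simp]: "name l \<Longrightarrow> name r \<Longrightarrow> lft (graft l r) = l"
  by (simp add: lft_def split_name_graft)

lemma rgt_graft [simp]: "name l \<Longrightarrow> name r \<Longrightarrow> rgt (graft l r) = r"
  by (simp add: rgt_def split_name_graft)

lemma name_lft_rgt: "name t \<Longrightarrow> t \<noteq> [] \<Longrightarrow> name (lft t) \<and> name (rgt t) \<and> graft (lft t) (rgt t) = t"
  by (cases rule: name.cases) auto

lemma finite_Nhat: "finite (Nhat n)"
proof (rule finite_subset)
  show "Nhat n \<subseteq> {xs. set xs \<subseteq> {0..n} \<and> length xs = n}"
    by (auto simp: Nhat_def in_set_conv_nth dest: name_nth_bounds)
qed (rule finite_lists_length_eq, simp)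

definition star_names :: "nat list \<Rightarrow> nat list \<Rightarrow> nat list set" where
  "star_names v w = {t \<in> Nhat (length v + length w).
     list_all2 (\<le>) (nearrow v w) t \<and> list_all2 (\<le>) t (nwarrow v w)}"

lemma finite_star_names: "finite (star_names v w)"
  by (rule finite_subset[OF _ finite_Nhat]) (auto simp: star_names_def)

lemma all_less_add_iff: "(\<forall>i<m + n. P i) \<longleftrightarrow> (\<forall>i<m. P i) \<and> (\<forall>j<n. P (m + j :: nat))"
  by (auto, metis add_diff_inverse_nat nat_add_left_cancel_less)

lemma mem_star_names_iff:
  "t \<in> star_names v w \<longleftrightarrow> name t \<and> length t = length v + length w \<and> (\<forall>i<length v. t ! i = v ! i) \<and>
     (\<forall>j<length w. (w ! j = 1 \<longrightarrow> t ! (length v + j) \<le> length v + 1) \<and>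
                   (w ! j \<noteq> 1 \<longrightarrow> t ! (length v + j) = w ! j + length v))"
proof (cases "name t \<and> length t = length v + length w")
  case True
  have bounds: "list_all2 (\<le>) (nearrow v w) t \<and> list_all2 (\<le>) t (nwarrow v w) \<longleftrightarrow>
      (\<forall>i<length v. v ! i \<le> t ! i \<and> t ! i \<le> v ! i) \<and>
      (\<forall>j<length w. tri (length v) (w ! j) \<le> t ! (length v + j) \<and> t ! (length v + j) \<le> w ! j + length v)"
    using True unfolding list_all2_conv_all_nth
    by (auto simp: nearrow_def nwarrow_def nth_append all_less_add_iff)
  have tail: "tri (length v) (w ! j) \<le> t ! (length v + j) \<and> t ! (length v + j) \<le> w ! j + length v \<longleftrightarrow>
      (w ! j = 1 \<longrightarrow> t ! (length v + j) \<le> length v + 1) \<and> (w ! j \<noteq> 1 \<longrightarrow> t ! (length v + j) = w ! j + length v)"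
    if "j < length w" for j
    using True that name_nth_bounds[of t "length v + j"] by (auto simp: tri_def)
  have head: "(\<forall>i<length v. v ! i \<le> t ! i \<and> t ! i \<le> v ! i) \<longleftrightarrow> (\<forall>i<length v. t ! i = v ! i)"
    by (auto intro: order.antisym)
  show ?thesis
    using True unfolding star_names_def Nhat_def mem_Collect_eq bounds head by (simp add: tail)
qed (auto simp: star_names_def Nhat_def)

lemma tri_0: "tri 0 = id"
  by (auto simp: tri_def)

lemma star_names_Nil_left: "name w \<Longrightarrow> star_names [] w = {w}"
  by (auto simp: star_names_def Nhat_def nearrow_def nwarrow_def tri_0 list_all2_refl
      intro: list_all2_antisym[where P = "(\<le>)" and Q = "(\<le>)"])

lemma star_names_Nil_right: "name v \<Longrightarrow> star_names v [] = {v}"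
  by (auto simp: star_names_def Nhat_def nearrow_def nwarrow_def list_all2_refl
      intro: list_all2_antisym[where P = "(\<le>)" and Q = "(\<le>)"])

lemma graft_left_mem_star_names:
  assumes "name a" and s: "s \<in> star_names b w"
  shows "graft a s \<in> star_names (graft a b) w"
proof -
  from s have "name s" "length s = length b + length w" "\<forall>i<length b. s ! i = b ! i"
    "\<forall>j<length w. (w ! j = 1 \<longrightarrow> s ! (length b + j) \<le> length b + 1) \<and>
       (w ! j \<noteq> 1 \<longrightarrow> s ! (length b + j) = w ! j + length b)"
    by (simp_all add: mem_star_names_iff)
  moreover have "graft a s ! i = graft a b ! i" if "i < length (graft a b)" for i
    using that calculation by (auto simp: nth_graft)
  moreover have "graft a s ! (length (graft a b) + j) = s ! (length b + j) + length a + 1"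
    if "j < length w" for j
    using that calculation by (simp add: nth_graft_right)
  ultimately show ?thesis
    using \<open>name a\<close> by (auto simp: mem_star_names_iff intro: name_graft)
qed

lemma graft_right_mem_star_names:
  assumes "name d" and s: "s \<in> star_names v c"
  shows "graft s d \<in> star_names v (graft c d)"
proof -
  from s have "name s" "length s = length v + length c" "\<forall>i<length v. s ! i = v ! i"
    "\<forall>j<length c. (c ! j = 1 \<longrightarrow> s ! (length v + j) \<le> length v + 1) \<and>
       (c ! j \<noteq> 1 \<longrightarrow> s ! (length v + j) = c ! j + length v)"
    by (simp_all add: mem_star_names_iff)
  moreover have "graft s d ! (length v + j) = graft c d ! j + length v"
    if "length c < j" "j < length (graft c d)" for j
    using that calculation by (simp add: nth_graft_right)
  moreover have "graft c d ! j \<noteq> 1" if "length c < j" "j < length (graft c d)" for j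
    using that nth_graft_right_ge[OF \<open>name d\<close>, of c j] by simp
  ultimately show ?thesis
    using \<open>name d\<close> by (auto simp: mem_star_names_iff nth_graft intro: name_graft)
qed

lemma graft_mem_star_names_leftD:
  assumes t: "graft l r \<in> star_names (graft a b) w" and "name r" "length l = length a"
  shows "l = a \<and> r \<in> star_names b w"
proof -
  let ?n = "length (graft a b)"
  from t have len: "length r = length b + length w"
    and head: "\<forall>i<?n. graft l r ! i = graft a b ! i"
    and tail: "\<forall>j<length w. (w ! j = 1 \<longrightarrow> graft l r ! (?n + j) \<le> ?n + 1) \<and>
                  (w ! j \<noteq> 1 \<longrightarrow> graft l r ! (?n + j) = w ! j + ?n)"
    using \<open>length l = length a\<close> by (simp_all add: mem_star_names_iff)
  have "l = a"
    using head \<open>length l = length a\<close> by (metis length_graft nth_equalityI nth_graft_left trans_less_add1)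
  moreover have "r ! i = b ! i" if "i < length b" for i
    using that head[rule_format, of "length a + 1 + i"] \<open>length l = length a\<close> len
    by (simp add: nth_graft_right)
  moreover have "graft l r ! (?n + j) = r ! (length b + j) + length a + 1" if "j < length w" for j
    using that \<open>length l = length a\<close> len by (simp add: nth_graft_right)
  ultimately show ?thesis
    using \<open>name r\<close> len tail by (auto simp: mem_star_names_iff)
qed

lemma graft_mem_star_names_rightD:
  assumes t: "graft l r \<in> star_names v (graft c d)" and "name l" "name d"
    and len_l: "length l = length v + length c"
  shows "l \<in> star_names v c \<and> r = d"
proof -
  from t have len: "length r = length d"
    and head: "\<forall>i<length v. graft l r ! i = v ! i"
    and tail: "\<forall>j<length (graft c d). (graft c d ! j = 1 \<longrightarrow> graft l r ! (length v + j) \<le> length v + 1) \<and>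
                  (graft c d ! j \<noteq> 1 \<longrightarrow> graft l r ! (length v + j) = graft c d ! j + length v)"
    using len_l by (simp_all add: mem_star_names_iff)
  have "l ! i = v ! i" if "i < length v" for i
    using that head len_l by simp
  moreover have "(c ! j = 1 \<longrightarrow> l ! (length v + j) \<le> length v + 1) \<and>
      (c ! j \<noteq> 1 \<longrightarrow> l ! (length v + j) = c ! j + length v)" if "j < length c" for j
    using that tail[rule_format, of j] len_l by simp
  moreover have "r = d"
  proof (rule nth_equalityI)
    fix k assume "k < length r"
    moreover have "graft c d ! (length c + 1 + k) \<noteq> 1"
      using nth_graft_right_ge[OF \<open>name d\<close>, of c "length c + 1 + k"] \<open>k < length r\<close> len by simp
    ultimately show "r ! k = d ! k"
      using tail[rule_format, of "length c + 1 + k"] len len_l by (simp add: nth_graft_right)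
  qed (rule len)
  ultimately show ?thesis
    using \<open>name l\<close> len_l by (simp add: mem_star_names_iff)
qed

lemma star_names_graft_nth_eq_1:
  assumes t: "t \<in> star_names (graft a b) (graft c d)" and "name b" "name c" "name d"
    and i: "i < length t" "t ! i = 1"
  shows "i \<le> length a \<or> i \<le> length (graft a b) + length c \<and> t ! (length (graft a b) + length c) = 1"
proof -
  let ?n = "length (graft a b)" and ?w = "graft c d"
  from t have name_t: "name t" and len: "length t = ?n + length ?w"
    and head: "\<forall>i<?n. t ! i = graft a b ! i"
    and tail: "\<forall>j<length ?w. (?w ! j = 1 \<longrightarrow> t ! (?n + j) \<le> ?n + 1) \<and>
                  (?w ! j \<noteq> 1 \<longrightarrow> t ! (?n + j) = ?w ! j + ?n)"
    by (simp_all add: mem_star_names_iff)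
  show ?thesis
  proof (cases "i < ?n")
    case True
    then show ?thesis using head i graft_nth_eq_1_le[OF \<open>name b\<close>, of i a] by simp
  next
    case False
    then obtain j where j: "i = ?n + j" "j < length ?w"
      using i len by (metis add_diff_inverse_nat nat_add_left_cancel_less)
    then have "?w ! j = 1"
      using i tail name_nth_bounds[OF name_graft[OF \<open>name c\<close> \<open>name d\<close>], of j] by auto
    then have "j \<le> length c" using j graft_nth_eq_1_le[OF \<open>name d\<close>] by blast
    moreover have "t ! (?n + length c) = 1"
    proof (cases "j = length c")
      case False
      have "t ! (?n + length c) \<le> ?n + 1" using tail by simp
      then have "t ! (?n + length c) \<le> t ! i"
        using name_nth_le_nth[OF name_t, of i "?n + length c"] False \<open>j \<le> length c\<close> j len by simp
      moreover have "?n + length c < length t" using len by simp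
      ultimately show ?thesis using name_nth_bounds[OF name_t, of "?n + length c"] i(2) by linarith
    qed (use i j in metis)
    ultimately show ?thesis using j by simp
  qed
qed

lemma star_names_graft_root:
  assumes t: "graft l r \<in> star_names (graft a b) (graft c d)"
    and "name r" "name b" "name c" "name d"
  shows "length l = length (graft a b) + length c \<or> length l = length a"
proof -
  let ?t = "graft l r" and ?p = "length (graft a b) + length c"
  have len: "length ?t = ?p + 1 + length d" and head: "?t ! length a = 1"
    using t by (auto simp: mem_star_names_iff)
  have root_last: "i \<le> length l" if "i < length ?t" "?t ! i = 1" for i
    using graft_nth_eq_1_le[OF \<open>name r\<close> that] .
  from star_names_graft_nth_eq_1[OF t assms(3-5), of "length l"]
  consider "length l \<le> length a" | "length l \<le> ?p" "?t ! ?p = 1" by auto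
  then show ?thesis
  proof cases
    case 1
    then show ?thesis using root_last[of "length a"] head len by simp
  next
    case 2
    then show ?thesis using root_last[of ?p] len by simp
  qed
qed

lemma star_names_graft:
  assumes "name a" "name b" "name c" "name d"
  shows "star_names (graft a b) (graft c d) =
    graft a ` star_names b (graft c d) \<union> (\<lambda>s. graft s d) ` star_names (graft a b) c"
proof
  show "star_names (graft a b) (graft c d) \<subseteq>
      graft a ` star_names b (graft c d) \<union> (\<lambda>s. graft s d) ` star_names (graft a b) c"
  proof
    fix t assume t: "t \<in> star_names (graft a b) (graft c d)"
    then have "name t" "t \<noteq> []" by (auto simp: mem_star_names_iff)
    then obtain l r where lr: "name l" "name r" "t = graft l r" using name_lft_rgt by metis
    then consider "length l = length (graft a b) + length c" | "length l = length a"
      using star_names_graft_root t assms by blast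
    then show "t \<in> graft a ` star_names b (graft c d) \<union> (\<lambda>s. graft s d) ` star_names (graft a b) c"
    proof cases
      case 1
      then show ?thesis using graft_mem_star_names_rightD t lr assms by blast
    next
      case 2
      then show ?thesis using graft_mem_star_names_leftD t lr assms by blast
    qed
  qed
qed (use assms graft_left_mem_star_names graft_right_mem_star_names in blast)

lemma star_names_graft_disjoint:
  "name d \<Longrightarrow> graft a ` star_names b (graft c d) \<inter> (\<lambda>s. graft s d) ` star_names (graft a b) c = {}"
  by (auto simp: graft_inject mem_star_names_iff)

abbreviation fin_supp :: "(nat list \<Rightarrow> 'a::field_char_0) \<Rightarrow> bool" where
  "fin_supp f \<equiv> finite (supp f)"

lemma supp_zero [simp]: "supp (0 :: nat list \<Rightarrow> 'a::field_char_0) = {}"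
  by (simp add: supp_def)

lemma supp_bas [simp]: "supp (bas v :: nat list \<Rightarrow> 'a::field_char_0) = {v}"
  by (auto simp: supp_def bas_def)

lemma bas_same [simp]: "bas v v = 1"
  by (simp add: bas_def)

lemma lin2_bas_bas [simp]: "lin2 b (bas v) (bas w) = b v w"
  by (rule ext) (simp add: lin2_def)

lemma lin2_bas_left: "lin2 b (bas v) g t = (\<Sum>w\<in>supp g. g w * b v w t)"
  by (simp add: lin2_def)

lemma lin2_bas_right: "lin2 b f (bas w) t = (\<Sum>v\<in>supp f. f v * b v w t)"
  by (simp add: lin2_def)

lemma lin2_eq_sum_superset:
  assumes "finite A" "supp f \<subseteq> A" "finite B" "supp g \<subseteq> B"
  shows "lin2 b f g t = (\<Sum>v\<in>A. \<Sum>w\<in>B. f v * g w * b v w t)"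
proof -
  have "lin2 b f g t = (\<Sum>v\<in>supp f. \<Sum>w\<in>B. f v * g w * b v w t)"
    unfolding lin2_def
    by (intro sum.cong refl sum.mono_neutral_left) (use assms in \<open>auto simp: supp_def\<close>)
  also have "\<dots> = (\<Sum>v\<in>A. \<Sum>w\<in>B. f v * g w * b v w t)"
    by (rule sum.mono_neutral_left) (use assms in \<open>auto simp: supp_def\<close>)
  finally show ?thesis .
qed

lemma lin2_swap: "lin2 b f g = lin2 (\<lambda>w v. b v w) g f"
  unfolding lin2_def by (rule ext, subst sum.swap) (simp add: mult_ac)

lemma lin2_expand_left: "lin2 b f g t = (\<Sum>v\<in>supp f. f v * lin2 b (bas v) g t)"
  by (simp add: lin2_def lin2_bas_left sum_distrib_left mult.assoc)

lemma lin2_expand_right: "lin2 b f g t = (\<Sum>w\<in>supp g. g w * lin2 b f (bas w) t)"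
  by (subst (1 2) lin2_swap) (rule lin2_expand_left)

lemma supp_lin2_subset: "supp (lin2 b f g) \<subseteq> (\<Union>v\<in>supp f. \<Union>w\<in>supp g. supp (b v w))"
proof
  fix t assume "t \<in> supp (lin2 b f g)"
  then have "(\<Sum>v\<in>supp f. \<Sum>w\<in>supp g. f v * g w * b v w t) \<noteq> 0" by (simp add: supp_def lin2_def)
  then obtain v w where "v \<in> supp f" "w \<in> supp g" "f v * g w * b v w t \<noteq> 0"
    by (meson sum.not_neutral_contains_not_neutral)
  then show "t \<in> (\<Union>v\<in>supp f. \<Union>w\<in>supp g. supp (b v w))" by (auto simp: supp_def)
qed

lemma supp_lin2_subsetI:
  "(\<And>v w. v \<in> supp f \<Longrightarrow> w \<in> supp g \<Longrightarrow> supp (b v w) \<subseteq> S) \<Longrightarrow> supp (lin2 b f g) \<subseteq> S"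
  using supp_lin2_subset[of b f g] by blast

lemma fin_supp_lin2:
  "fin_supp f \<Longrightarrow> fin_supp g \<Longrightarrow> (\<And>v w. v \<in> supp f \<Longrightarrow> w \<in> supp g \<Longrightarrow> fin_supp (b v w)) \<Longrightarrow>
   fin_supp (lin2 b f g)"
  by (rule finite_subset[OF supp_lin2_subset]) auto

lemma lin2_lincomb_left:
  assumes "finite I" "finite A" "\<And>i. i \<in> I \<Longrightarrow> supp (G i) \<subseteq> A" "supp F \<subseteq> A"
    and "fin_supp h" and F: "\<And>s. F s = (\<Sum>i\<in>I. c i * G i s)"
  shows "lin2 b F h t = (\<Sum>i\<in>I. c i * lin2 b (G i) h t)"
proof -
  have "lin2 b F h t = (\<Sum>s\<in>A. \<Sum>u\<in>supp h. (\<Sum>i\<in>I. c i * G i s) * h u * b s u t)"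
    using lin2_eq_sum_superset[OF assms(2,4,5) order_refl] by (simp add: F)
  also have "\<dots> = (\<Sum>s\<in>A. \<Sum>u\<in>supp h. \<Sum>i\<in>I. c i * (G i s * h u * b s u t))"
    by (simp only: sum_distrib_right) (simp add: mult_ac)
  also have "\<dots> = (\<Sum>i\<in>I. \<Sum>s\<in>A. \<Sum>u\<in>supp h. c i * (G i s * h u * b s u t))"
    by (subst sum.swap, subst (2) sum.swap) simp
  also have "\<dots> = (\<Sum>i\<in>I. c i * lin2 b (G i) h t)"
    using lin2_eq_sum_superset[OF assms(2) assms(3) assms(5) order_refl]
    by (simp add: sum_distrib_left)
  finally show ?thesis .
qed

lemma lin2_lin2_left:
  assumes f: "fin_supp f" and g: "fin_supp g" and h: "fin_supp h" and b2: "\<And>v w. fin_supp (b2 v w)"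
  shows "lin2 b1 (lin2 b2 f g) h t = (\<Sum>v\<in>supp f. \<Sum>w\<in>supp g. f v * g w * lin2 b1 (b2 v w) h t)"
proof -
  let ?C = "\<Union>v\<in>supp f. \<Union>w\<in>supp g. supp (b2 v w)"
  have "lin2 b1 (lin2 b2 f g) h t =
      (\<Sum>p\<in>supp f \<times> supp g. f (fst p) * g (snd p) * lin2 b1 (b2 (fst p) (snd p)) h t)"
  proof (rule lin2_lincomb_left[where A = ?C])
    show "finite ?C" using f g b2 by blast
    show "supp (lin2 b2 f g) \<subseteq> ?C" by (rule supp_lin2_subset)
    show "\<And>p. p \<in> supp f \<times> supp g \<Longrightarrow> supp (b2 (fst p) (snd p)) \<subseteq> ?C" by force
  qed (use f g h in \<open>auto simp: lin2_def sum.cartesian_product case_prod_beta\<close>)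
  then show ?thesis by (simp add: sum.cartesian_product case_prod_beta)
qed

lemma lin2_lin2_right:
  assumes f: "fin_supp f" and g: "fin_supp g" and h: "fin_supp h" and b2: "\<And>v w. fin_supp (b2 v w)"
  shows "lin2 b1 f (lin2 b2 g h) t = (\<Sum>v\<in>supp g. \<Sum>w\<in>supp h. g v * h w * lin2 b1 f (b2 v w) t)"
proof -
  have "lin2 b1 f (lin2 b2 g h) t = lin2 (\<lambda>w v. b1 v w) (lin2 b2 g h) f t"
    by (simp only: lin2_swap[of b1 f])
  also have "\<dots> = (\<Sum>v\<in>supp g. \<Sum>w\<in>supp h. g v * h w * lin2 (\<lambda>w v. b1 v w) (b2 v w) f t)"
    by (rule lin2_lin2_left[OF g h f b2])
  finally show ?thesis by (simp add: lin2_swap[of b1 f])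
qed

lemma lin2_assoc_of_basis:
  assumes x: "fin_supp x" and y: "fin_supp y" and z: "fin_supp z"
    and b2: "\<And>v w. fin_supp (b2 v w)" and b2': "\<And>v w. fin_supp (b2' v w)"
    and basis: "\<And>v w u. v \<in> supp x \<Longrightarrow> w \<in> supp y \<Longrightarrow> u \<in> supp z \<Longrightarrow>
      lin2 b1 (b2 v w) (bas u) = lin2 b1' (bas v) (b2' w u)"
  shows "lin2 b1 (lin2 b2 x y) z = lin2 b1' x (lin2 b2' y z)"
proof
  fix t
  have "lin2 b1 (lin2 b2 x y) z t =
      (\<Sum>v\<in>supp x. \<Sum>w\<in>supp y. \<Sum>u\<in>supp z. x v * y w * z u * lin2 b1 (b2 v w) (bas u) t)"
    by (simp add: lin2_lin2_left[OF x y z b2] lin2_expand_right[of b1 "b2 _ _" z] sum_distrib_left mult.assoc)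
  also have "\<dots> = (\<Sum>v\<in>supp x. \<Sum>w\<in>supp y. \<Sum>u\<in>supp z. x v * y w * z u * lin2 b1' (bas v) (b2' w u) t)"
    using basis by (intro sum.cong refl) simp
  also have "\<dots> = (\<Sum>w\<in>supp y. \<Sum>u\<in>supp z. \<Sum>v\<in>supp x. x v * y w * z u * lin2 b1' (bas v) (b2' w u) t)"
    by (subst sum.swap) (rule sum.cong[OF refl], rule sum.swap)
  also have "\<dots> = lin2 b1' x (lin2 b2' y z) t"
    by (simp add: lin2_lin2_right[OF x y z b2'] lin2_expand_left[of b1' x] sum_distrib_left mult_ac)
  finally show "lin2 b1 (lin2 b2 x y) z t = lin2 b1' x (lin2 b2' y z) t" .
qed

lemma lin2_add_left:
  assumes "fin_supp f" "fin_supp f'" "fin_supp g"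
  shows "lin2 b (f + f') g = lin2 b f g + lin2 b f' g"
proof
  fix t
  let ?A = "supp f \<union> supp f'"
  have A: "finite ?A" "supp f \<subseteq> ?A" "supp f' \<subseteq> ?A" "supp (f + f') \<subseteq> ?A"
    using assms by (auto simp: supp_def)
  show "lin2 b (f + f') g t = (lin2 b f g + lin2 b f' g) t"
    using lin2_eq_sum_superset[OF A(1) _ assms(3) order_refl] A
    by (simp add: distrib_right sum.distrib)
qed

lemma lin2_add_right:
  "fin_supp f \<Longrightarrow> fin_supp g \<Longrightarrow> fin_supp g' \<Longrightarrow> lin2 b f (g + g') = lin2 b f g + lin2 b f g'"
  by (subst (1 2 3) lin2_swap) (rule lin2_add_left)

lemma lin2_smul_left: "lin2 b (smul c f) g = smul c (lin2 b f g)"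
proof (cases "c = 0")
  case False
  then have "supp (smul c f) = supp f" by (auto simp: supp_def smul_def)
  then show ?thesis
    unfolding lin2_def by (simp add: smul_def sum_distrib_left mult.assoc)
qed (simp add: lin2_def smul_def supp_def)

lemma lin2_smul_right: "lin2 b f (smul c g) = smul c (lin2 b f g)"
  by (subst (1 2) lin2_swap) (rule lin2_smul_left)

lemma lin2_cong: "(\<And>v w. v \<in> supp f \<Longrightarrow> w \<in> supp g \<Longrightarrow> b v w = b' v w) \<Longrightarrow> lin2 b f g = lin2 b' f g"
  unfolding lin2_def by (rule ext) (auto intro!: sum.cong)

lemma lin2_add_op: "lin2 b f g + lin2 b' f g = lin2 (\<lambda>v w. b v w + b' v w) f g"
  by (rule ext) (simp add: lin2_def sum.distrib distrib_left)

lemma lin2_eq_0: "(\<And>v w. v \<in> supp f \<Longrightarrow> w \<in> supp g \<Longrightarrow> b v w = 0) \<Longrightarrow> lin2 b f g = 0"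
  by (rule ext) (simp add: lin2_def)

lemma supp_indicator [simp]: "supp (indicator S :: nat list \<Rightarrow> 'a::field_char_0) = S"
  by (auto simp: supp_def indicator_def)

lemma bas_eq_indicator: "bas v = indicator {v}"
  by (auto simp: bas_def indicator_def)

lemma star_b_Nil_left [simp]: "star_b [] w = bas w"
  by (simp add: star_b_def)

lemma star_b_Nil_right [simp]: "star_b v [] = bas v"
  by (simp add: star_b_def)

lemma star_b_eq_indicator: "name v \<Longrightarrow> name w \<Longrightarrow> star_b v w = indicator (star_names v w)"
  by (auto simp: star_b_def star_names_Nil_left star_names_Nil_right bas_eq_indicator)
    (auto simp: indicator_def star_names_def)

lemma star_bas [simp]: "star (bas v) (bas w) = star_b v w"
  by (simp add: star_def)

lemma prec_bas [simp]: "prec (bas v) (bas w) = prec_b v w"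
  by (simp add: prec_def)

lemma succ_bas [simp]: "succ (bas v) (bas w) = succ_b v w"
  by (simp add: succ_def)

lemma vee_bas [simp]: "vee (bas v) (bas w) = bas (graft v w)"
  by (simp add: vee_def vee_b_def)

lemma fin_supp_star_b: "fin_supp (star_b v w :: nat list \<Rightarrow> 'a::field_char_0)"
proof -
  have "supp (star_b v w :: nat list \<Rightarrow> 'a) \<subseteq> {v, w} \<union> Nhat (length v + length w)"
    by (auto simp: star_b_def supp_def bas_def split: if_splits)
  then show ?thesis using finite_Nhat finite_subset by blast
qed

lemma fin_supp_vee_b: "fin_supp (vee_b v w :: nat list \<Rightarrow> 'a::field_char_0)"
  by (simp add: vee_b_def)

lemma fin_supp_vee: "fin_supp F \<Longrightarrow> fin_supp G \<Longrightarrow> fin_supp (vee F G)"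
  unfolding vee_def by (rule fin_supp_lin2) (auto simp: fin_supp_vee_b)

lemma fin_supp_star: "fin_supp F \<Longrightarrow> fin_supp G \<Longrightarrow> fin_supp (star F G)"
  unfolding star_def by (rule fin_supp_lin2) (auto simp: fin_supp_star_b)

lemma fin_supp_prec_b: "fin_supp (prec_b v w :: nat list \<Rightarrow> 'a::field_char_0)"
  unfolding prec_b_def by (auto intro!: fin_supp_vee fin_supp_star simp: fin_supp_star_b)

lemma fin_supp_succ_b: "fin_supp (succ_b v w :: nat list \<Rightarrow> 'a::field_char_0)"
  unfolding succ_b_def by (auto intro!: fin_supp_vee fin_supp_star simp: fin_supp_star_b)

lemma Vspace_iff: "F \<in> Vspace \<longleftrightarrow> fin_supp F \<and> (\<forall>t\<in>supp F. name t)"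
  by (auto simp: Vspace_def)

lemma Vstar_iff: "F \<in> Vstar \<longleftrightarrow> fin_supp F \<and> (\<forall>t\<in>supp F. name t \<and> t \<noteq> [])"
  by (auto simp: Vstar_def Vspace_def supp_def)

lemma Vstar_subset_Vspace: "Vstar \<subseteq> Vspace"
  by (auto simp: Vstar_def)

lemma bas_in_Vspace: "name v \<Longrightarrow> bas v \<in> Vspace"
  by (simp add: Vspace_iff)

lemma bas_in_Vstar: "name v \<Longrightarrow> v \<noteq> [] \<Longrightarrow> bas v \<in> Vstar"
  by (simp add: Vstar_iff)

lemma lin2_in_Vspace:
  assumes "F \<in> Vspace" "G \<in> Vspace" "\<And>v w. name v \<Longrightarrow> name w \<Longrightarrow> b v w \<in> Vspace"
  shows "lin2 b F G \<in> Vspace"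
proof -
  have "fin_supp (lin2 b F G)"
    by (rule fin_supp_lin2) (use assms in \<open>auto simp: Vspace_iff\<close>)
  moreover have "supp (lin2 b F G) \<subseteq> {t. name t}"
    by (rule supp_lin2_subsetI) (use assms in \<open>auto simp: Vspace_iff\<close>)
  ultimately show ?thesis by (auto simp: Vspace_iff)
qed

lemma lin2_in_Vstar:
  assumes "F \<in> Vspace" "G \<in> Vspace" "\<And>v w. name v \<Longrightarrow> name w \<Longrightarrow> b v w \<in> Vstar"
  shows "lin2 b F G \<in> Vstar"
proof -
  have "fin_supp (lin2 b F G)"
    by (rule fin_supp_lin2) (use assms in \<open>auto simp: Vspace_iff Vstar_iff\<close>)
  moreover have "supp (lin2 b F G) \<subseteq> {t. name t \<and> t \<noteq> []}"
    by (rule supp_lin2_subsetI) (use assms in \<open>auto simp: Vspace_iff Vstar_iff\<close>)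
  ultimately show ?thesis by (auto simp: Vstar_iff)
qed

lemma zero_in_Vstar: "0 \<in> Vstar"
  by (simp add: Vstar_iff)

lemma vee_in_Vstar: "F \<in> Vspace \<Longrightarrow> G \<in> Vspace \<Longrightarrow> vee F G \<in> Vstar"
  unfolding vee_def by (rule lin2_in_Vstar) (auto simp: vee_b_def Vstar_iff intro: name_graft)

lemma star_b_in_Vspace: "name v \<Longrightarrow> name w \<Longrightarrow> star_b v w \<in> Vspace"
  by (auto simp: star_b_eq_indicator Vspace_iff finite_star_names mem_star_names_iff)

lemma star_in_Vspace: "F \<in> Vspace \<Longrightarrow> G \<in> Vspace \<Longrightarrow> star F G \<in> Vspace"
  unfolding star_def by (rule lin2_in_Vspace) (auto simp: star_b_in_Vspace)

lemma prec_in_Vstar: "F \<in> Vspace \<Longrightarrow> G \<in> Vspace \<Longrightarrow> prec F G \<in> Vstar"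
  unfolding prec_def
  by (rule lin2_in_Vstar)
    (auto simp: prec_b_def zero_in_Vstar bas_in_Vstar name_lft_rgt star_b_in_Vspace intro!: vee_in_Vstar star_in_Vspace bas_in_Vspace)

lemma succ_in_Vstar: "F \<in> Vspace \<Longrightarrow> G \<in> Vspace \<Longrightarrow> succ F G \<in> Vstar"
  unfolding succ_def
  by (rule lin2_in_Vstar)
    (auto simp: succ_b_def zero_in_Vstar bas_in_Vstar name_lft_rgt star_b_in_Vspace intro!: vee_in_Vstar star_in_Vspace bas_in_Vspace)

lemma sum_bas: "fin_supp x \<Longrightarrow> (\<Sum>v\<in>supp x. x v * bas v t) = x t"
proof -
  assume "fin_supp x"
  have "(\<Sum>v\<in>supp x. x v * bas v t) = (\<Sum>v\<in>supp x. if v = t then x v else 0)"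
    by (rule sum.cong) (auto simp: bas_def)
  also have "\<dots> = x t" using \<open>fin_supp x\<close> by (simp add: supp_def)
  finally show ?thesis .
qed

lemma star_Nil_right: "fin_supp x \<Longrightarrow> star x (bas []) = x"
  by (rule ext) (simp add: star_def lin2_bas_right sum_bas)

lemma star_Nil_left: "fin_supp x \<Longrightarrow> star (bas []) x = x"
  by (rule ext) (simp add: star_def lin2_bas_left sum_bas mult.commute)

lemma prec_Nil_left: "prec (bas []) x = 0"
  unfolding prec_def by (rule lin2_eq_0) (simp add: prec_b_def)

lemma succ_Nil_right: "succ x (bas []) = 0"
  unfolding succ_def by (rule lin2_eq_0) (simp add: succ_b_def)

lemma prec_zero_left [simp]: "prec 0 x = 0"
  unfolding prec_def by (rule lin2_eq_0) simp

lemma succ_zero_right [simp]: "succ x 0 = 0"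
  unfolding succ_def by (rule lin2_eq_0) simp

lemma prec_b_graft: "name a \<Longrightarrow> name b \<Longrightarrow> prec_b (graft a b) u = vee (bas a) (star_b b u)"
  by (simp add: prec_b_def)

lemma succ_b_graft: "name c \<Longrightarrow> name d \<Longrightarrow> succ_b v (graft c d) = vee (star_b v c) (bas d)"
  by (simp add: succ_b_def)

lemma prec_vee: "F \<in> Vspace \<Longrightarrow> G \<in> Vspace \<Longrightarrow> H \<in> Vspace \<Longrightarrow> prec (vee F G) H = vee F (star G H)"
  unfolding prec_def vee_def star_def
  by (rule lin2_assoc_of_basis)
    (auto simp: Vspace_iff fin_supp_vee_b fin_supp_star_b vee_b_def prec_b_graft simp flip: vee_def)

lemma succ_vee: "F \<in> Vspace \<Longrightarrow> G \<in> Vspace \<Longrightarrow> H \<in> Vspace \<Longrightarrow> succ F (vee G H) = vee (star F G) H"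
  unfolding succ_def vee_def star_def
  by (rule lin2_assoc_of_basis[symmetric])
    (auto simp: Vspace_iff fin_supp_vee_b fin_supp_star_b vee_b_def succ_b_graft simp flip: vee_def)

lemma vee_indicator:
  assumes "finite S" "finite T" "\<forall>t\<in>T. name t"
  shows "vee (indicator S) (indicator T) = indicator ((\<lambda>(s, t). graft s t) ` (S \<times> T))"
proof
  fix u
  have inj: "inj_on (\<lambda>(s, t). graft s t) (S \<times> T)"
    using assms(3) by (auto simp: inj_on_def graft_inject)
  have "vee (indicator S) (indicator T) u = (\<Sum>p\<in>S \<times> T. indicator {(\<lambda>(s, t). graft s t) p} u)"
    by (simp add: vee_def lin2_def vee_b_def bas_eq_indicator sum.cartesian_product case_prod_beta)
  also have "\<dots> = (\<Sum>y\<in>(\<lambda>(s, t). graft s t) ` (S \<times> T). indicator {y} u)"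
    by (simp add: sum.reindex[OF inj])
  also have "\<dots> = indicator ((\<lambda>(s, t). graft s t) ` (S \<times> T)) u"
    using assms(1,2) by (simp add: indicator_def of_bool_def)
  finally show "vee (indicator S) (indicator T) u = indicator ((\<lambda>(s, t). graft s t) ` (S \<times> T)) u" .
qed

lemma star_b_graft_eq_prec_b_plus_succ_b:
  assumes "name a" "name b" "name c" "name d"
  shows "star_b (graft a b) (graft c d) = prec_b (graft a b) (graft c d) + succ_b (graft a b) (graft c d)"
proof -
  let ?v = "graft a b" and ?w = "graft c d"
  have names: "name ?v" "name ?w" using assms by (auto intro: name_graft)
  have "prec_b ?v ?w = vee (indicator {a}) (indicator (star_names b ?w))"
    using assms names by (simp add: prec_b_graft star_b_eq_indicator bas_eq_indicator)
  also have "\<dots> = indicator (graft a ` star_names b ?w)"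
    using names by (subst vee_indicator) (auto simp: finite_star_names mem_star_names_iff intro: arg_cong[where f = indicator])
  finally have prec: "prec_b ?v ?w = indicator (graft a ` star_names b ?w)" .
  have "succ_b ?v ?w = vee (indicator (star_names ?v c)) (indicator {d})"
    using assms names by (simp add: succ_b_graft star_b_eq_indicator bas_eq_indicator)
  also have "\<dots> = indicator ((\<lambda>s. graft s d) ` star_names ?v c)"
    using assms by (subst vee_indicator) (auto simp: finite_star_names intro: arg_cong[where f = indicator])
  finally have succ: "succ_b ?v ?w = indicator ((\<lambda>s. graft s d) ` star_names ?v c)" .
  show ?thesis
    using star_names_graft[OF assms] star_names_graft_disjoint[OF assms(4), of a b c]
    by (simp add: prec succ star_b_eq_indicator[OF names] fun_eq_iff indicator_union_arith
        flip: indicator_inter_arith)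
qed

lemma star_b_eq_prec_b_plus_succ_b:
  assumes "name v" "name w" "v \<noteq> [] \<or> w \<noteq> []"
  shows "star_b v w = prec_b v w + succ_b v w"
proof (cases "v = [] \<or> w = []")
  case True
  then show ?thesis using assms(3) by (auto simp: prec_b_def succ_b_def)
next
  case False
  then show ?thesis
    using star_b_graft_eq_prec_b_plus_succ_b[of "lft v" "rgt v" "lft w" "rgt w"] name_lft_rgt[OF assms(1)] name_lft_rgt[OF assms(2)]
    by simp
qed

lemma star_eq_prec_plus_succ:
  assumes "F \<in> Vspace" "G \<in> Vspace" "F [] = 0 \<or> G [] = 0"
  shows "star F G = prec F G + succ F G"
proof -
  have "star F G = lin2 (\<lambda>v w. prec_b v w + succ_b v w) F G"
    unfolding star_def
    by (rule lin2_cong) (use assms star_b_eq_prec_b_plus_succ_b in \<open>auto simp: Vspace_iff supp_def\<close>)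
  then show ?thesis by (simp add: prec_def succ_def lin2_add_op)
qed

lemma prec_prec_b_of_assoc:
  assumes "name a" "a \<noteq> []" "name b" "name c"
    and assoc: "star (star_b (rgt a) b :: nat list \<Rightarrow> 'a::field_char_0) (bas c) = star (bas (rgt a)) (star_b b c)"
  shows "prec (prec_b a b :: nat list \<Rightarrow> 'a) (bas c) = prec (bas a) (star_b b c)"
proof -
  obtain l r where lr: "name l" "name r" "graft l r = a" "lft a = l" "rgt a = r"
    using name_lft_rgt[OF assms(1,2)] by blast
  have "prec (prec_b a b :: nat list \<Rightarrow> 'a) (bas c) = prec (vee (bas l) (star_b r b)) (bas c)"
    using lr by (auto simp: prec_b_graft)
  also have "\<dots> = vee (bas l) (star (star_b r b) (bas c))"
    using lr assms by (simp add: prec_vee bas_in_Vspace star_b_in_Vspace)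
  also have "\<dots> = vee (bas l) (star (bas r) (star_b b c))"
    using assoc lr by simp
  also have "\<dots> = prec (bas a) (star_b b c)"
    using lr assms by (simp flip: prec_vee add: bas_in_Vspace star_b_in_Vspace)
  finally show ?thesis .
qed

lemma prec_succ_b:
  assumes "name a" "name b" "name c"
  shows "prec (succ_b a b :: nat list \<Rightarrow> 'a::field_char_0) (bas c) = succ (bas a) (prec_b b c)"
proof (cases "b = []")
  case True
  then show ?thesis by (simp add: succ_b_def prec_b_def)
next
  case False
  then obtain l r where lr: "name l" "name r" "graft l r = b"
    using name_lft_rgt[OF assms(2)] by blast
  have "prec (succ_b a b :: nat list \<Rightarrow> 'a) (bas c) = prec (vee (star_b a l) (bas r)) (bas c)"
    using lr by (auto simp: succ_b_graft)
  also have "\<dots> = vee (star_b a l) (star_b r c)"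
    using lr assms by (simp add: prec_vee bas_in_Vspace star_b_in_Vspace)
  also have "\<dots> = succ (bas a) (vee (bas l) (star_b r c))"
    using lr assms by (simp add: succ_vee bas_in_Vspace star_b_in_Vspace)
  also have "\<dots> = succ (bas a) (prec_b b c)"
    using lr by (auto simp: prec_b_graft)
  finally show ?thesis .
qed

lemma succ_star_b_of_assoc:
  assumes "name a" "name b" "name c" "c \<noteq> []"
    and assoc: "star (star_b a b :: nat list \<Rightarrow> 'a::field_char_0) (bas (lft c)) = star (bas a) (star_b b (lft c))"
  shows "succ (star_b a b :: nat list \<Rightarrow> 'a) (bas c) = succ (bas a) (succ_b b c)"
proof -
  obtain l r where lr: "name l" "name r" "graft l r = c" "lft c = l" "rgt c = r"
    using name_lft_rgt[OF assms(3,4)] by blast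
  have "succ (star_b a b :: nat list \<Rightarrow> 'a) (bas c) = vee (star (star_b a b) (bas l)) (bas r)"
    using lr assms by (auto simp: succ_vee star_b_in_Vspace bas_in_Vspace simp flip: vee_bas)
  also have "\<dots> = vee (star (bas a) (star_b b l)) (bas r)"
    using assoc lr by simp
  also have "\<dots> = succ (bas a) (succ_b b c)"
    using lr assms by (auto simp: succ_vee succ_b_graft bas_in_Vspace star_b_in_Vspace)
  finally show ?thesis .
qed

lemma star_b_assoc_from_dendriform:
  assumes "name a" "name b" "name c" "a \<noteq> []" "c \<noteq> []"
    and "prec (prec_b a b :: nat list \<Rightarrow> 'a::field_char_0) (bas c) = prec (bas a) (star_b b c)"
    and "succ (star_b a b :: nat list \<Rightarrow> 'a) (bas c) = succ (bas a) (succ_b b c)"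
  shows "star (star_b a b :: nat list \<Rightarrow> 'a) (bas c) = star (bas a) (star_b b c)"
proof -
  have V: "(bas a :: nat list \<Rightarrow> 'a) \<in> Vspace" "(bas c :: nat list \<Rightarrow> 'a) \<in> Vspace"
    "(star_b a b :: nat list \<Rightarrow> 'a) \<in> Vspace" "(star_b b c :: nat list \<Rightarrow> 'a) \<in> Vspace"
    using assms by (simp_all add: bas_in_Vspace star_b_in_Vspace)
  have "star (star_b a b :: nat list \<Rightarrow> 'a) (bas c) = prec (star_b a b) (bas c) + succ (star_b a b) (bas c)"
    by (rule star_eq_prec_plus_succ) (use V assms in \<open>auto simp: bas_def\<close>)
  also have "\<dots> = prec (prec_b a b) (bas c) + prec (succ_b a b) (bas c) + succ (star_b a b) (bas c)"
    using assms by (simp add: star_b_eq_prec_b_plus_succ_b prec_def lin2_add_left fin_supp_prec_b fin_supp_succ_b)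
  also have "\<dots> = prec (bas a) (star_b b c) + succ (bas a) (prec_b b c + succ_b b c)"
    using assms by (simp add: prec_succ_b succ_def lin2_add_right fin_supp_prec_b fin_supp_succ_b add.assoc)
  also have "\<dots> = star (bas a) (star_b b c)"
    using star_eq_prec_plus_succ[OF V(1) V(4)] assms by (simp add: star_b_eq_prec_b_plus_succ_b bas_def)
  finally show ?thesis .
qed

lemma star_b_assoc:
  "name a \<Longrightarrow> name b \<Longrightarrow> name c \<Longrightarrow>
   star (star_b a b :: nat list \<Rightarrow> 'a::field_char_0) (bas c) = star (bas a) (star_b b c)"
proof (induction "length a + length b + length c" arbitrary: a b c rule: less_induct)
  case less
  show ?case
  proof (cases "a = [] \<or> b = [] \<or> c = []")
    case True
    then show ?thesis by (auto simp: star_Nil_left star_Nil_right fin_supp_star_b)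
  next
    case False
    then have ne: "a \<noteq> []" "c \<noteq> []" by auto
    obtain al ar where a: "name ar" "graft al ar = a" "rgt a = ar"
      using name_lft_rgt[OF less.prems(1) ne(1)] by blast
    obtain cl cr where c: "name cl" "graft cl cr = c" "lft c = cl"
      using name_lft_rgt[OF less.prems(3) ne(2)] by blast
    have "prec (prec_b a b :: nat list \<Rightarrow> 'a) (bas c) = prec (bas a) (star_b b c)"
    proof (rule prec_prec_b_of_assoc)
      show "star (star_b (rgt a) b :: nat list \<Rightarrow> 'a) (bas c) = star (bas (rgt a)) (star_b b c)"
        using less.hyps[of ar b c] less.prems a by force
    qed (use less.prems ne in auto)
    moreover have "succ (star_b a b :: nat list \<Rightarrow> 'a) (bas c) = succ (bas a) (succ_b b c)"
    proof (rule succ_star_b_of_assoc)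
      show "star (star_b a b :: nat list \<Rightarrow> 'a) (bas (lft c)) = star (bas a) (star_b b (lft c))"
        using less.hyps[of a b cl] less.prems c by force
    qed (use less.prems ne in auto)
    ultimately show ?thesis using less.prems ne by (rule star_b_assoc_from_dendriform[rotated 5])
  qed
qed

lemma prec_prec_b:
  assumes "name a" "name b" "name c"
  shows "prec (prec_b a b :: nat list \<Rightarrow> 'a::field_char_0) (bas c) = prec (bas a) (star_b b c)"
proof (cases "a = []")
  case True
  then show ?thesis by (simp add: prec_b_def prec_Nil_left)
next
  case False
  then show ?thesis
    using assms name_lft_rgt[OF assms(1)] by (auto intro!: prec_prec_b_of_assoc star_b_assoc)
qed

lemma succ_star_b:
  assumes "name a" "name b" "name c"
  shows "succ (star_b a b :: nat list \<Rightarrow> 'a::field_char_0) (bas c) = succ (bas a) (succ_b b c)"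
proof (cases "c = []")
  case True
  then show ?thesis by (simp add: succ_b_def succ_Nil_right)
next
  case False
  then show ?thesis
    using assms name_lft_rgt[OF assms(3)] by (auto intro!: succ_star_b_of_assoc star_b_assoc)
qed

lemma prec_prec:
  "x \<in> Vspace \<Longrightarrow> y \<in> Vspace \<Longrightarrow> z \<in> Vspace \<Longrightarrow> prec (prec x y) z = prec x (star y z)"
  unfolding prec_def star_def
  by (rule lin2_assoc_of_basis)
    (auto simp: Vspace_iff fin_supp_prec_b fin_supp_star_b prec_prec_b simp flip: prec_def)

lemma prec_succ:
  "x \<in> Vspace \<Longrightarrow> y \<in> Vspace \<Longrightarrow> z \<in> Vspace \<Longrightarrow> prec (succ x y) z = succ x (prec y z)"
  unfolding prec_def succ_def
  by (rule lin2_assoc_of_basis)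
    (auto simp: Vspace_iff fin_supp_prec_b fin_supp_succ_b prec_succ_b simp flip: prec_def succ_def)

lemma succ_star:
  "x \<in> Vspace \<Longrightarrow> y \<in> Vspace \<Longrightarrow> z \<in> Vspace \<Longrightarrow> succ (star x y) z = succ x (succ y z)"
  unfolding succ_def star_def
  by (rule lin2_assoc_of_basis)
    (auto simp: Vspace_iff fin_supp_star_b fin_supp_succ_b succ_star_b simp flip: succ_def)

lemma add_in_Vstar: "x \<in> Vstar \<Longrightarrow> y \<in> Vstar \<Longrightarrow> x + y \<in> Vstar"
proof -
  assume "x \<in> Vstar" "y \<in> Vstar"
  moreover have "supp (x + y) \<subseteq> supp x \<union> supp y" by (auto simp: supp_def)
  ultimately show ?thesis unfolding Vstar_iff by (meson UnE finite_Un finite_subset subsetD)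
qed

lemma smul_in_Vstar: "x \<in> Vstar \<Longrightarrow> smul c x \<in> Vstar"
  by (auto simp: Vstar_iff supp_def smul_def elim!: finite_subset[rotated])

lemma dendriform_Vstar: "dendriform (Vstar :: (nat list \<Rightarrow> 'a::field_char_0) set) prec succ"
proof -
  let ?E = "Vstar :: (nat list \<Rightarrow> 'a) set"
  have V: "x \<in> Vspace" "fin_supp x" "x [] = 0" if "x \<in> ?E" for x
    using that by (auto simp: Vstar_def Vspace_iff)
  have closed: "\<forall>x\<in>?E. \<forall>y\<in>?E. prec x y \<in> ?E \<and> succ x y \<in> ?E"
    using V prec_in_Vstar succ_in_Vstar by blast
  have additive: "\<forall>x\<in>?E. \<forall>y\<in>?E. \<forall>z\<in>?E.
      prec (x + y) z = prec x z + prec y z \<and> prec z (x + y) = prec z x + prec z y \<and>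
      succ (x + y) z = succ x z + succ y z \<and> succ z (x + y) = succ z x + succ z y"
    using V unfolding prec_def succ_def by (simp add: lin2_add_left lin2_add_right)
  have homogeneous: "\<forall>c. \<forall>x\<in>?E. \<forall>y\<in>?E.
      prec (smul c x) y = smul c (prec x y) \<and> prec x (smul c y) = smul c (prec x y) \<and>
      succ (smul c x) y = smul c (succ x y) \<and> succ x (smul c y) = smul c (succ x y)"
    unfolding prec_def succ_def by (simp add: lin2_smul_left lin2_smul_right)
  have axioms: "\<forall>x\<in>?E. \<forall>y\<in>?E. \<forall>z\<in>?E.
      prec (prec x y) z = prec x (prec y z + succ y z) \<and> prec (succ x y) z = succ x (prec y z) \<and>
      succ (prec x y + succ x y) z = succ x (succ y z)"
    using V by (simp add: prec_prec prec_succ succ_star flip: star_eq_prec_plus_succ)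
  show ?thesis
    unfolding dendriform_def
    using zero_in_Vstar add_in_Vstar smul_in_Vstar closed additive homogeneous axioms by blast
qed

lemma sum_in_gen_by:
  "finite S \<Longrightarrow> (\<And>v. v \<in> S \<Longrightarrow> g v \<in> gen_by l r x0) \<Longrightarrow> (\<Sum>v\<in>S. g v) \<in> gen_by l r x0"
  by (induction S rule: finite_induct) (auto intro: gen_by.intros)

lemma sum_apply: "(\<Sum>v\<in>S. g v) t = (\<Sum>v\<in>S. g v t)"
  by (induction S rule: infinite_finite_induct) simp_all

lemma eq_sum_smul_bas: "fin_supp f \<Longrightarrow> f = (\<Sum>v\<in>supp f. smul (f v) (bas v))"
  by (rule ext) (simp add: sum_apply smul_def sum_bas)

lemma bas_in_gen_by:
  "name v \<Longrightarrow> v \<noteq> [] \<Longrightarrow> (bas v :: nat list \<Rightarrow> 'a::field_char_0) \<in> gen_by prec succ (bas [1])"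
proof (induction rule: name.induct)
  case (name_graft a b)
  let ?G = "gen_by prec succ (bas [1]) :: (nat list \<Rightarrow> 'a) set"
  have one: "graft [] [] = [1]" by (simp add: graft_def)
  have "bas (graft a []) \<in> ?G"
  proof (cases "a = []")
    case False
    have "succ (bas a) (bas (graft [] [])) \<in> ?G"
      unfolding one by (rule gen_r[OF name_graft.IH(1)[OF False] gen_base])
    then show ?thesis using name_graft.hyps by (simp add: succ_b_graft name_Nil)
  qed (simp add: one gen_base)
  show ?case
  proof (cases "b = []")
    case False
    have "prec (bas (graft a [])) (bas b) \<in> ?G"
      by (rule gen_l[OF \<open>bas (graft a []) \<in> ?G\<close> name_graft.IH(2)[OF False]])
    then show ?thesis using name_graft.hyps by (simp add: prec_b_graft name_Nil)
  qed (use \<open>bas (graft a []) \<in> ?G\<close> in simp)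
qed simp

lemma gen_by_bas_one: "gen_by prec succ (bas [1]) = (Vstar :: (nat list \<Rightarrow> 'a::field_char_0) set)"
proof
  show "gen_by prec succ (bas [1]) \<subseteq> (Vstar :: (nat list \<Rightarrow> 'a) set)"
  proof
    fix x :: "nat list \<Rightarrow> 'a" assume "x \<in> gen_by prec succ (bas [1])"
    then show "x \<in> Vstar"
    proof (induction rule: gen_by.induct)
      case gen_base
      show ?case by (rule bas_in_Vstar) (auto intro: name_graft[OF name_Nil name_Nil, simplified graft_def, simplified])
    qed (use zero_in_Vstar add_in_Vstar smul_in_Vstar prec_in_Vstar succ_in_Vstar Vstar_subset_Vspace in blast)+
  qed
  show "Vstar \<subseteq> (gen_by prec succ (bas [1]) :: (nat list \<Rightarrow> 'a) set)"
  proof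
    fix f :: "nat list \<Rightarrow> 'a" assume "f \<in> Vstar"
    then have "(\<Sum>v\<in>supp f. smul (f v) (bas v)) \<in> gen_by prec succ (bas [1])"
      by (intro sum_in_gen_by gen_smul bas_in_gen_by) (auto simp: Vstar_iff)
    then show "f \<in> gen_by prec succ (bas [1])"
      using \<open>f \<in> Vstar\<close> eq_sum_smul_bas by (force simp: Vstar_iff)
  qed
qed

theorem mainTheorem12:
  shows "dendriform (Vstar :: (nat list \<Rightarrow> 'a::field_char_0) set) prec succ
    \<and> (\<forall>x\<in>(Vstar :: (nat list \<Rightarrow> 'a) set). \<forall>y\<in>Vstar. prec x y + succ x y = star x y)
    \<and> gen_by prec succ (bas [1]) = (Vstar :: (nat list \<Rightarrow> 'a) set)
    \<and> (\<forall>x\<in>(Vspace :: (nat list \<Rightarrow> 'a) set). \<forall>y\<in>Vspace. \<forall>z\<in>Vspace.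
         (\<forall>L R. Option.bind (prec_o x y) (\<lambda>a. prec_o a z) = Some L
                \<longrightarrow> prec_o x (star y z) = Some R \<longrightarrow> L = R)
       \<and> (\<forall>L R. Option.bind (succ_o x y) (\<lambda>a. prec_o a z) = Some L
                \<longrightarrow> Option.bind (prec_o y z) (\<lambda>b. succ_o x b) = Some R \<longrightarrow> L = R)
       \<and> (\<forall>L R. succ_o (star x y) z = Some L
                \<longrightarrow> Option.bind (succ_o y z) (\<lambda>b. succ_o x b) = Some R \<longrightarrow> L = R))
    \<and> (\<forall>x\<in>(Vspace :: (nat list \<Rightarrow> 'a) set). star x (bas []) = x \<and> star (bas []) x = x)"
proof (intro conjI ballI allI impI)
  show "dendriform (Vstar :: (nat list \<Rightarrow> 'a) set) prec succ" by (rule dendriform_Vstar)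
  show "gen_by prec succ (bas [1]) = (Vstar :: (nat list \<Rightarrow> 'a) set)" by (rule gen_by_bas_one)
  show "prec x y + succ x y = star x y" if "x \<in> Vstar" "y \<in> Vstar" for x y :: "nat list \<Rightarrow> 'a"
    using that by (simp add: star_eq_prec_plus_succ Vstar_def)
  show "star x (bas []) = x" "star (bas []) x = x" if "x \<in> Vspace" for x :: "nat list \<Rightarrow> 'a"
    using that by (simp_all add: Vspace_iff star_Nil_left star_Nil_right)
  \<comment> \<open>With the junk value 0 for () \<prec> () and () \<succ> (), the three identities hold on all of
    K hat N^\<infinity>, in particular wherever both sides are defined.\<close>
qed (auto simp: prec_o_def succ_o_def prec_prec prec_succ succ_star split: if_splits)

end
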